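(* Let $\mathcal D$ be a finite domain. If $(\sigma_r,\sigma_b)$ has law $\mu^{+,\mathrm{const}}_{\mathcal D}$, then $(\omega(\sigma_r),\omega(\sigma_b))$ is uniformly distributed on the set of pairs $(\omega_r,\omega_b)$ of loop configurations on $\mathcal D$ having no edge in common. In particular $\omega(\sigma_r)\cup\omega(\sigma_b)$ has the law $\mathbb P_{\mathcal D}$ of the loop $O(2)$ model on $\mathcal D$ with edge-weight $1$.
   Context: $\mathbb H$ is the hexagonal lattice. A domain is a subgraph $\mathcal D$ of $\mathbb H$ without isolated vertices for which there exists a self-avoiding polygon $\partial_E\mathcal D$ such that $E(\mathcal D)$ is the set of edges in the bounded component of $\mathbb H\setminus\partial_E\mathcal D$; $F(\mathcal D)$ is the set of faces adjacent to an edge of $\mathcal D$ and $\partial_{\mathrm{in}}\mathcal D$ the faces of $F(\mathcal D)$ bounded by an edge of $\partial_E\mathcal D$. A pair $(\sigma_r,\sigma_b)\in\{+,-\}^{F(\mathcal D)}\times\{+,-\}^{F(\mathcal D)}$ (red and blue spins) is coherent if for all adjacent faces $u,v\in F(\mathcal D)$, $\sigma_r(u)=\sigma_r(v)$ or $\sigma_b(u)=\sigma_b(v)$. $\mu_{\mathcal D}$ is the uniform measure on coherent pairs, and $\mu^{+,\mathrm{const}}_{\mathcal D}:=\mu_{\mathcal D}(\cdot\mid\sigma_r\equiv+\text{ on }\partial_{\mathrm{in}}\mathcal D\text{ and }\sigma_b\text{ is constant on }\partial_{\mathrm{in}}\mathcal D)$. For $\sigma\in\{+,-\}^{F(\mathcal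 D)}$, $\omega(\sigma)$ is the set of edges of $\mathcal D$ separating adjacent faces with different spins. A loop configuration on $\mathcal D$ is a subgraph of $\mathcal D$ with all degrees even, and $\mathbb P_{\mathcal D}(\omega)\propto2^{\#\text{loops of }\omega}$. *)

theory Defs
  imports "HOL-Probability.Probability_Mass_Function" "HOL-Library.FuncSet"
begin

text \<open>Model of the hexagonal lattice H via its dual, the triangular lattice.
 Faces of H are the points of Z x Z (triangular lattice).
 An edge of H is represented by the two-element set of the faces it separates;
 a vertex of H is represented by the set of the three (pairwise adjacent) faces
 meeting at it.  An edge e is incident to a vertex t iff e is a subset of t.\<close>

type_synonym face = "int \<times> int"
type_synonym hedge = "face set"
type_synonym hvertex = "face set"

definition adj :: "face \<Rightarrow> face \<Rightarrow> bool" where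
  "adj u v \<longleftrightarrow> (fst v - fst u, snd v - snd u) \<in>
     {(1,0), (-1,0), (0,1), (0,-1), (1,-1), (-1,1)}"

definition is_hedge :: "hedge \<Rightarrow> bool" where
  "is_hedge e \<longleftrightarrow> (\<exists>u v. adj u v \<and> e = {u, v})"

definition is_hvertex :: "hvertex \<Rightarrow> bool" where
  "is_hvertex t \<longleftrightarrow> card t = 3 \<and> (\<forall>u\<in>t. \<forall>v\<in>t. u \<noteq> v \<longrightarrow> adj u v)"

text \<open>Self-avoiding polygon of H: a cyclic list of k >= 3 distinct vertices,
 consecutive ones (cyclically) joined by an edge of H (the edge between two
 neighbouring vertices t, t' is t \<inter> t').\<close>

definition self_avoiding_polygon :: "hvertex list \<Rightarrow> bool" where
  "self_avoiding_polygon ps \<longleftrightarrow> length ps \<ge> 3 \<and> distinct ps \<and>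
     (\<forall>i < length ps. is_hvertex (ps ! i) \<and>
        is_hedge (ps ! i \<inter> ps ! ((i + 1) mod length ps)))"

definition polygon_edges :: "hvertex list \<Rightarrow> hedge set" where
  "polygon_edges ps = {ps ! i \<inter> ps ! ((i + 1) mod length ps) | i. i < length ps}"

text \<open>A (finite) domain is described by the finite set S of faces of H enclosed by
 its boundary polygon: the edge boundary of S (edges with exactly one side in S)
 is a self-avoiding polygon.  The edges of the domain (edges in the bounded
 component of the complement of the polygon) are those with both sides in S.\<close>

definition boundary_edges :: "face set \<Rightarrow> hedge set" where
  "boundary_edges S = {{u, v} | u v. adj u v \<and> u \<in> S \<and> v \<notin> S}"

definition is_domain :: "face set \<Rightarrow> bool" where
  "is_domain S \<longleftrightarrow> finite S \<and>
     (\<exists>ps. self_avoiding_polygon ps \<and> boundary_edges S = polygon_edges ps)"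

definition dom_edges :: "face set \<Rightarrow> hedge set" where
  "dom_edges S = {{u, v} | u v. adj u v \<and> u \<in> S \<and> v \<in> S}"

definition dom_faces :: "face set \<Rightarrow> face set" where
  "dom_faces S = {w. \<exists>e \<in> dom_edges S. w \<in> e}"

definition inner_boundary :: "face set \<Rightarrow> face set" where
  "inner_boundary S = {w \<in> dom_faces S. \<exists>e \<in> boundary_edges S. w \<in> e}"

text \<open>Spin configurations in {+,-}^F(D); + is True.\<close>
definition spins :: "face set \<Rightarrow> (face \<Rightarrow> bool) set" where
  "spins S = PiE (dom_faces S) (\<lambda>_. UNIV)"

definition coherent :: "face set \<Rightarrow> (face \<Rightarrow> bool) \<Rightarrow> (face \<Rightarrow> bool) \<Rightarrow> bool" where
  "coherent S sr sb \<longleftrightarrow> (\<forall>u \<in> dom_faces S. \<forall>v \<in> dom_faces S.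
      adj u v \<longrightarrow> sr u = sr v \<or> sb u = sb v)"

definition plus_const_configs :: "face set \<Rightarrow> ((face \<Rightarrow> bool) \<times> (face \<Rightarrow> bool)) set" where
  "plus_const_configs S = {(sr, sb). sr \<in> spins S \<and> sb \<in> spins S \<and> coherent S sr sb \<and>
      (\<forall>w \<in> inner_boundary S. sr w) \<and>
      (\<forall>w \<in> inner_boundary S. \<forall>w' \<in> inner_boundary S. sb w = sb w')}"

definition mu_plus_const :: "face set \<Rightarrow> ((face \<Rightarrow> bool) \<times> (face \<Rightarrow> bool)) pmf" where
  "mu_plus_const S = pmf_of_set (plus_const_configs S)"

definition omega :: "face set \<Rightarrow> (face \<Rightarrow> bool) \<Rightarrow> hedge set" where
  "omega S \<sigma> = {e \<in> dom_edges S. \<exists>u v. e = {u, v} \<and> \<sigma> u \<noteq> \<sigma> v}"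

text \<open>Loop configurations on D (subgraphs, given by their edge sets, with all degrees even).\<close>
definition loop_config :: "face set \<Rightarrow> hedge set \<Rightarrow> bool" where
  "loop_config S \<omega> \<longleftrightarrow> \<omega> \<subseteq> dom_edges S \<and>
     (\<forall>t. is_hvertex t \<longrightarrow> even (card {e \<in> \<omega>. e \<subseteq> t}))"

text \<open>Number of loops = number of connected components of the subgraph, i.e. of
 classes of its edges under the equivalence generated by sharing an endpoint.\<close>
definition n_loops :: "hedge set \<Rightarrow> nat" where
  "n_loops \<omega> = card (\<omega> // ({(e, e'). e \<in> \<omega> \<and> e' \<in> \<omega> \<and>
       (\<exists>t. is_hvertex t \<and> e \<subseteq> t \<and> e' \<subseteq> t)}\<^sup>*))"

definition loop_O2 :: "face set \<Rightarrow> hedge set \<Rightarrow> real" where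
  "loop_O2 S \<omega> = (if loop_config S \<omega>
     then 2 ^ n_loops \<omega> / (\<Sum>\<omega>' \<in> {\<omega>'. loop_config S \<omega>'}. 2 ^ n_loops \<omega>')
     else 0)"

definition disjoint_loop_pairs :: "face set \<Rightarrow> (hedge set \<times> hedge set) set" where
  "disjoint_loop_pairs S = {(wr, wb). loop_config S wr \<and> loop_config S wb \<and> wr \<inter> wb = {}}"

end

theory Submission
  imports Defs
begin

(* Domain walls of a spin configuration that is constant on the inner boundary form a loop
   configuration: at a vertex inside the domain the three spin changes have even parity, and at a
   boundary vertex the two inner faces are inner boundary faces and carry equal spins.  Conversely,
   every loop configuration omega is the domain-wall set of the configuration given by the parity of
   the number of edges of omega crossed by a horizontal ray; this parity is constant along the
   boundary polygon, which omega never crosses, so it can be normalised to + on the inner boundary.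
   A pair of configurations is coherent iff its domain walls are disjoint.  Multiplying a pair by a
   fixed pair (a, b) with + boundary values replaces the domain walls by their symmetric differences
   with (omega(a), omega(b)); hence all fibres of (sr, sb) |-> (omega(sr), omega(sb)) over disjoint
   pairs of loop configurations have the same size, and the image law is uniform.  Finally, every
   vertex has degree 0 or 2 in a loop configuration, so the loop configurations contained in omega
   are exactly the unions of its loops, and omega splits as a disjoint union of two loop
   configurations in exactly 2^(number of loops) ways. *)

section \<open>Counting lemmas and uniform laws\<close>

lemma Int_nonempty_if_card_gt:
  assumes "finite C" "A \<subseteq> C" "B \<subseteq> C" "card C < card A + card B"
  shows "A \<inter> B \<noteq> {}"
proof
  assume "A \<inter> B = {}"
  have "finite A" "finite B"
    using assms finite_subset by blast+
  then have "card A + card B = card (A \<union> B)"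
    using \<open>A \<inter> B = {}\<close> by (simp add: card_Un_disjoint)
  also have "\<dots> \<le> card C"
    using assms by (intro card_mono) auto
  finally show False
    using assms(4) by simp
qed

lemma even_card_edges_in_triangle_iff:
  assumes "p \<noteq> q" "p \<noteq> r" "q \<noteq> r" and "\<forall>e\<in>\<omega>. card e = 2"
  shows "even (card {e\<in>\<omega>. e \<subseteq> {p, q, r}}) \<longleftrightarrow> (({p, q} \<in> \<omega>) \<longleftrightarrow> ({p, r} \<in> \<omega>) \<noteq> ({q, r} \<in> \<omega>))"
proof -
  have edges: "{e\<in>\<omega>. e \<subseteq> {p, q, r}} = \<omega> \<inter> {{p, q}, {p, r}, {q, r}}"
    using assms(4) by (auto simp: card_2_iff insert_commute)
  have "{p, q} \<noteq> {p, r}" "{p, q} \<noteq> {q, r}" "{p, r} \<noteq> {q, r}"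
    using assms(1-3) by (auto simp: doubleton_eq_iff)
  then show ?thesis
    unfolding edges by (cases "{p, q} \<in> \<omega>"; cases "{p, r} \<in> \<omega>"; cases "{q, r} \<in> \<omega>") simp_all
qed

lemma card_edges_in_subset_le:
  assumes "finite t" "\<forall>e\<in>\<omega>. card e = 2"
  shows "card {e\<in>\<omega>. e \<subseteq> t} \<le> card t choose 2"
proof -
  have "card {e\<in>\<omega>. e \<subseteq> t} \<le> card {B. B \<subseteq> t \<and> card B = 2}"
    using assms by (intro card_mono) auto
  then show ?thesis
    using n_subsets[OF assms(1)] by simp
qed

lemma card_closed_subsets:
  assumes "equiv A r" "finite A"
  shows "card {X. X \<subseteq> A \<and> r `` X \<subseteq> X} = 2 ^ card (A // r)"
proof -
  have "bij_betw Union (Pow (A // r)) {X. X \<subseteq> A \<and> r `` X \<subseteq> X}"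
  proof (rule bij_betw_imageI)
    have "C \<subseteq> D" if C: "C \<subseteq> A // r" and D: "D \<subseteq> A // r" and "\<Union>C = \<Union>D" for C D
    proof
      fix X
      assume "X \<in> C"
      then obtain x where "x \<in> X"
        using C in_quotient_imp_non_empty[OF assms(1)] by blast
      then obtain Y where "Y \<in> D" "x \<in> Y"
        using \<open>\<Union>C = \<Union>D\<close> \<open>X \<in> C\<close> by blast
      then have "X = Y"
        using quotient_disj[OF assms(1), of X Y] C D \<open>X \<in> C\<close> \<open>x \<in> X\<close> by blast
      then show "X \<in> D"
        using \<open>Y \<in> D\<close> by simp
    qed
    then show "inj_on Union (Pow (A // r))"
      by (intro inj_onI) (simp add: subset_antisym)
    show "Union ` Pow (A // r) = {X. X \<subseteq> A \<and> r `` X \<subseteq> X}"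
    proof (intro equalityI subsetI)
      fix X
      assume "X \<in> Union ` Pow (A // r)"
      then obtain C where C: "C \<subseteq> A // r" and X: "X = \<Union>C"
        by blast
      then have "X \<subseteq> A"
        using Union_quotient[OF assms(1)] by blast
      moreover have "r `` X \<subseteq> X"
      proof
        fix y
        assume "y \<in> r `` X"
        then obtain x where "x \<in> X" "(x, y) \<in> r"
          by blast
        moreover from \<open>x \<in> X\<close> obtain Y where "Y \<in> C" "x \<in> Y"
          unfolding X by blast
        ultimately have "y \<in> Y"
          using in_quotient_imp_closed[OF assms(1)] C by blast
        then show "y \<in> X"
          unfolding X using \<open>Y \<in> C\<close> by blast
      qed
      ultimately show "X \<in> {X. X \<subseteq> A \<and> r `` X \<subseteq> X}"
        by blast
    next
      fix X
      assume X: "X \<in> {X. X \<subseteq> A \<and> r `` X \<subseteq> X}"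
      then have "X = \<Union>((\<lambda>x. r `` {x}) ` X)"
        using equiv_class_self[OF assms(1)] by blast
      moreover have "(\<lambda>x. r `` {x}) ` X \<subseteq> A // r"
        using X by (auto intro: quotientI)
      ultimately show "X \<in> Union ` Pow (A // r)"
        by blast
    qed
  qed
  then have "card {X. X \<subseteq> A \<and> r `` X \<subseteq> X} = card (Pow (A // r))"
    by (simp add: bij_betw_same_card)
  also have "\<dots> = 2 ^ card (A // r)"
    by (rule card_Pow[OF finite_quotient[OF assms(2) equiv_type[OF assms(1)]]])
  finally show ?thesis .
qed

lemma card_closed_subsets_rtrancl:
  assumes "finite A" "R \<subseteq> A \<times> A" "sym R"
  shows "card {X. X \<subseteq> A \<and> R `` X \<subseteq> X} = 2 ^ card (A // R\<^sup>*)"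
proof -
  define r where "r = R\<^sup>* \<inter> A \<times> A"
  have "sym (R\<^sup>*)"
    using sym_rtrancl[OF assms(3)] .
  then have "equiv A r"
    unfolding r_def by (intro equivI) (auto simp: refl_on_def sym_def trans_def intro: rtrancl_trans)
  moreover have "A // R\<^sup>* = A // r"
  proof -
    have "R\<^sup>* `` {x} = r `` {x}" if "x \<in> A" for x
    proof -
      have "y \<in> A" if "(x, y) \<in> R\<^sup>*" for y
        using that \<open>x \<in> A\<close> assms(2) by (cases rule: rtranclE) auto
      then show ?thesis
        unfolding r_def using \<open>x \<in> A\<close> by blast
    qed
    then show ?thesis
      unfolding quotient_def by auto
  qed
  moreover have "R `` X \<subseteq> X \<longleftrightarrow> r `` X \<subseteq> X" for X
  proof
    assume "R `` X \<subseteq> X"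
    then show "r `` X \<subseteq> X"
      using Image_closed_trancl[of R X] unfolding r_def by blast
  next
    assume "r `` X \<subseteq> X"
    moreover have "R \<subseteq> r"
      unfolding r_def using assms(2) by auto
    ultimately show "R `` X \<subseteq> X"
      by blast
  qed
  ultimately show ?thesis
    using card_closed_subsets assms(1) by simp
qed

lemma card_eq_sum_card_fibres:
  assumes "finite A" "finite B" "f ` A \<subseteq> B"
  shows "card A = (\<Sum>y\<in>B. card {x\<in>A. f x = y})"
  using sum.group[OF assms, of "\<lambda>_. 1 :: nat"] by simp

lemma pmf_map_pmf_of_set:
  assumes "finite A" "A \<noteq> {}"
  shows "pmf (map_pmf f (pmf_of_set A)) y = card {x\<in>A. f x = y} / card A"
proof -
  have "A \<inter> f -` {y} = {x\<in>A. f x = y}"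
    by blast
  then show ?thesis
    unfolding pmf_map measure_pmf_of_set[OF assms(2,1)] by simp
qed

lemma map_pmf_of_set_equal_fibres:
  assumes "finite A" "A \<noteq> {}" "f ` A = B" and fibres: "\<And>y. y \<in> B \<Longrightarrow> card {x\<in>A. f x = y} = k"
  shows "map_pmf f (pmf_of_set A) = pmf_of_set B"
proof (rule pmf_eqI)
  fix y
  have "finite B" "B \<noteq> {}"
    using assms by auto
  have "card A = k * card B"
    using card_eq_sum_card_fibres[of A B f] assms \<open>finite B\<close> by simp
  moreover have "k > 0"
    using assms(1,2) calculation by (auto simp: card_gt_0_iff)
  moreover have "card {x\<in>A. f x = y} = (if y \<in> B then k else 0)"
  proof (cases "y \<in> B")
    case False
    then have "{x\<in>A. f x = y} = {}"
      using assms(3) by blast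
    then show ?thesis
      using False by (simp only: card.empty if_False)
  qed (simp add: fibres)
  ultimately show "pmf (map_pmf f (pmf_of_set A)) y = pmf (pmf_of_set B) y"
    unfolding pmf_map_pmf_of_set[OF assms(1,2)] pmf_of_set[OF \<open>B \<noteq> {}\<close> \<open>finite B\<close>]
    by (simp add: indicator_def)
qed

section \<open>The hexagonal lattice\<close>

lemma adj_sym: "adj u v \<Longrightarrow> adj v u"
  unfolding adj_def by (simp; elim disjE; simp)

lemma adj_imp_neq: "adj u v \<Longrightarrow> u \<noteq> v"
  unfolding adj_def by auto

lemma adj_cases:
  assumes "adj u v"
  obtains a b where "{u, v} = {(a, b), (a + 1, b)}"
    | a b where "{u, v} = {(a, b), (a, b + 1)}"
    | a b where "{u, v} = {(a + 1, b), (a, b + 1)}"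
proof -
  obtain a b c d where uv: "u = (a, b)" "v = (c, d)" by fastforce
  from assms have "(c - a, d - b) \<in> {(1, 0), (-1, 0), (0, 1), (0, -1), (1, -1), (-1, 1)}"
    unfolding adj_def uv by simp
  then consider "c = a + 1" "d = b" | "a = c + 1" "d = b" | "c = a" "d = b + 1"
    | "c = a" "b = d + 1" | "a = c + 1" "d = b + 1" | "c = a + 1" "b = d + 1"
    by (simp; elim disjE; simp)
  then show thesis
    by cases (use that in \<open>simp_all add: uv insert_commute\<close>)
qed

lemma is_hvertexI: "adj p q \<Longrightarrow> adj p r \<Longrightarrow> adj q r \<Longrightarrow> is_hvertex {p, q, r}"
  unfolding is_hvertex_def by (auto dest: adj_imp_neq adj_sym simp: card_insert_if)

lemma is_hvertexE:
  assumes "is_hvertex t"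
  obtains p q r where "t = {p, q, r}" "adj p q" "adj p r" "adj q r"
  using assms unfolding is_hvertex_def card_3_iff by blast

lemma card_hedge: "is_hedge e \<Longrightarrow> card e = 2"
  unfolding is_hedge_def by (auto dest: adj_imp_neq simp: card_insert_if)

section \<open>Even subgraphs and ray parity\<close>

definition even_subgraph :: "hedge set \<Rightarrow> bool" where
  "even_subgraph \<omega> \<longleftrightarrow> finite \<omega> \<and> (\<forall>e\<in>\<omega>. is_hedge e) \<and>
     (\<forall>t. is_hvertex t \<longrightarrow> even (card {e\<in>\<omega>. e \<subseteq> t}))"

lemma even_subgraph_triangle:
  assumes "even_subgraph \<omega>" "adj p q" "adj p r" "adj q r"
  shows "{p, q} \<in> \<omega> \<longleftrightarrow> ({p, r} \<in> \<omega>) \<noteq> ({q, r} \<in> \<omega>)"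
proof -
  have "even (card {e\<in>\<omega>. e \<subseteq> {p, q, r}})"
    using assms(1) is_hvertexI[OF assms(2-4)] unfolding even_subgraph_def by blast
  moreover have "\<forall>e\<in>\<omega>. card e = 2"
    using assms(1) card_hedge unfolding even_subgraph_def by blast
  ultimately show ?thesis
    using even_card_edges_in_triangle_iff[of p q r \<omega>] adj_imp_neq[OF assms(2)]
      adj_imp_neq[OF assms(3)] adj_imp_neq[OF assms(4)] by blast
qed

text \<open>The spin configuration with domain walls \<open>\<omega>\<close> is recovered as the parity of the number of
  edges of \<open>\<omega>\<close> crossed by the horizontal ray from a face to the right.\<close>

definition crossings :: "hedge set \<Rightarrow> face \<Rightarrow> int set" where
  "crossings \<omega> f = {x. fst f \<le> x \<and> {(x, snd f), (x + 1, snd f)} \<in> \<omega>}"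

definition ray_parity :: "hedge set \<Rightarrow> face \<Rightarrow> bool" where
  "ray_parity \<omega> f \<longleftrightarrow> odd (card (crossings \<omega> f))"

lemma finite_crossings:
  assumes "finite \<omega>"
  shows "finite (crossings \<omega> f)"
proof -
  have "inj (\<lambda>x::int. {(x, snd f), (x + 1, snd f)})"
  proof (rule injI)
    fix x y :: int
    assume "{(x, snd f), (x + 1, snd f)} = {(y, snd f), (y + 1, snd f)}"
    then show "x = y"
      by (auto simp: doubleton_eq_iff)
  qed
  then have "finite ((\<lambda>x. {(x, snd f), (x + 1, snd f)}) -` \<omega>)"
    using assms by (rule finite_vimageI[rotated])
  then show ?thesis
    unfolding crossings_def by (rule rev_finite_subset) auto
qed

lemma ray_parity_horizontal:
  assumes "finite \<omega>"
  shows "ray_parity \<omega> (a, b) \<noteq> ray_parity \<omega> (a + 1, b) \<longleftrightarrow> {(a, b), (a + 1, b)} \<in> \<omega>"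
proof -
  have "crossings \<omega> (a, b) =
      (if {(a, b), (a + 1, b)} \<in> \<omega> then insert a else id) (crossings \<omega> (a + 1, b))"
    unfolding crossings_def by (auto simp: order_le_less)
  moreover have "a \<notin> crossings \<omega> (a + 1, b)"
    unfolding crossings_def by simp
  ultimately show ?thesis
    unfolding ray_parity_def using finite_crossings[OF assms] by auto
qed

lemma ray_parity_vertical:
  assumes "even_subgraph \<omega>"
  shows "ray_parity \<omega> (a, b) \<noteq> ray_parity \<omega> (a, b + 1) \<longleftrightarrow> {(a, b), (a, b + 1)} \<in> \<omega>"
proof -
  have fin: "finite \<omega>" and hedges: "\<forall>e\<in>\<omega>. is_hedge e"
    using assms unfolding even_subgraph_def by blast+
  have "finite (fst ` \<Union>\<omega>)"
    using fin hedges unfolding is_hedge_def by fastforce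
  define N where "N = Max (insert 0 (fst ` \<Union>\<omega>)) + 1"
  have N: "fst f < N" if "f \<in> \<Union>\<omega>" for f
  proof -
    have "fst f \<le> Max (insert 0 (fst ` \<Union>\<omega>))"
      using \<open>finite (fst ` \<Union>\<omega>)\<close> that by (intro Max_ge) auto
    then show ?thesis
      unfolding N_def by simp
  qed
  have "a \<le> max a N"
    by simp
  then show ?thesis
  proof (induction a rule: int_le_induct)
    case base
    have "crossings \<omega> (max a N, c) = {}" for c
      unfolding crossings_def using N by fastforce
    moreover have "{(max a N, b), (max a N, b + 1)} \<notin> \<omega>"
      using N by fastforce
    ultimately show ?case
      unfolding ray_parity_def by simp
  next
    case (step i)
    have below: "ray_parity \<omega> (i - 1, b) \<noteq> ray_parity \<omega> (i, b) \<longleftrightarrow> {(i - 1, b), (i, b)} \<in> \<omega>"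
      using ray_parity_horizontal[OF fin, of "i - 1" b] by simp
    have above: "ray_parity \<omega> (i - 1, b + 1) \<noteq> ray_parity \<omega> (i, b + 1) \<longleftrightarrow>
        {(i - 1, b + 1), (i, b + 1)} \<in> \<omega>"
      using ray_parity_horizontal[OF fin, of "i - 1" "b + 1"] by simp
    have "{(i - 1, b), (i, b)} \<in> \<omega> \<longleftrightarrow>
        ({(i - 1, b), (i - 1, b + 1)} \<in> \<omega>) \<noteq> ({(i, b), (i - 1, b + 1)} \<in> \<omega>)"
      by (rule even_subgraph_triangle[OF assms]) (auto simp: adj_def)
    moreover have "{(i, b), (i - 1, b + 1)} \<in> \<omega> \<longleftrightarrow>
        ({(i, b), (i, b + 1)} \<in> \<omega>) \<noteq> ({(i - 1, b + 1), (i, b + 1)} \<in> \<omega>)"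
      by (rule even_subgraph_triangle[OF assms]) (auto simp: adj_def)
    ultimately show ?case
      using step.IH below above by argo
  qed
qed

lemma ray_parity_diagonal:
  assumes "even_subgraph \<omega>"
  shows "ray_parity \<omega> (a + 1, b) \<noteq> ray_parity \<omega> (a, b + 1) \<longleftrightarrow> {(a + 1, b), (a, b + 1)} \<in> \<omega>"
proof -
  have "{(a, b), (a + 1, b)} \<in> \<omega> \<longleftrightarrow>
      ({(a, b), (a, b + 1)} \<in> \<omega>) \<noteq> ({(a + 1, b), (a, b + 1)} \<in> \<omega>)"
    by (rule even_subgraph_triangle[OF assms]) (auto simp: adj_def)
  moreover have "finite \<omega>"
    using assms unfolding even_subgraph_def by blast
  ultimately show ?thesis
    using ray_parity_horizontal[of \<omega> a b] ray_parity_vertical[OF assms, of a b] by argo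
qed

lemma ray_parity_adj:
  assumes "even_subgraph \<omega>" "adj u v"
  shows "ray_parity \<omega> u \<noteq> ray_parity \<omega> v \<longleftrightarrow> {u, v} \<in> \<omega>"
proof -
  have swap: "(ray_parity \<omega> u \<noteq> ray_parity \<omega> v \<longleftrightarrow> {u, v} \<in> \<omega>) \<longleftrightarrow>
      (ray_parity \<omega> f \<noteq> ray_parity \<omega> g \<longleftrightarrow> {f, g} \<in> \<omega>)" if "{u, v} = {f, g}" for f g
    using that by (auto simp: doubleton_eq_iff insert_commute)
  have "finite \<omega>"
    using assms(1) unfolding even_subgraph_def by blast
  from assms(2) obtain f g where "{u, v} = {f, g}"
    and "ray_parity \<omega> f \<noteq> ray_parity \<omega> g \<longleftrightarrow> {f, g} \<in> \<omega>"
  proof (cases rule: adj_cases)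
    case (1 a b)
    show thesis
      by (rule that[OF 1 ray_parity_horizontal[OF \<open>finite \<omega>\<close>]])
  next
    case (2 a b)
    show thesis
      by (rule that[OF 2 ray_parity_vertical[OF assms(1)]])
  next
    case (3 a b)
    show thesis
      by (rule that[OF 3 ray_parity_diagonal[OF assms(1)]])
  qed
  then show ?thesis
    using swap by blast
qed

section \<open>Domain walls\<close>

lemma dom_faces_subset: "dom_faces S \<subseteq> S"
  unfolding dom_faces_def dom_edges_def by auto

lemma finite_dom_edges: "finite S \<Longrightarrow> finite (dom_edges S)"
proof -
  assume "finite S"
  have "dom_edges S \<subseteq> (\<lambda>(u, v). {u, v}) ` (S \<times> S)"
    unfolding dom_edges_def by auto
  then show ?thesis
    using \<open>finite S\<close> by (auto intro: finite_subset)
qed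

lemma ball_dom_edges_iff:
  "(\<forall>e\<in>dom_edges S. P e) \<longleftrightarrow> (\<forall>u v. adj u v \<longrightarrow> u \<in> S \<longrightarrow> v \<in> S \<longrightarrow> P {u, v})"
  unfolding dom_edges_def by blast

lemma doubleton_in_dom_edges_iff:
  assumes "adj u v"
  shows "{u, v} \<in> dom_edges S \<longleftrightarrow> u \<in> S \<and> v \<in> S"
proof
  assume "{u, v} \<in> dom_edges S"
  then obtain a b where "{u, v} = {a, b}" "a \<in> S" "b \<in> S"
    unfolding dom_edges_def by blast
  then show "u \<in> S \<and> v \<in> S"
    by (metis doubleton_eq_iff)
next
  assume "u \<in> S \<and> v \<in> S"
  then show "{u, v} \<in> dom_edges S"
    using assms unfolding dom_edges_def by blast
qed

lemma adj_in_dom_faces_iff: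
  assumes "adj u v"
  shows "u \<in> dom_faces S \<and> v \<in> dom_faces S \<longleftrightarrow> u \<in> S \<and> v \<in> S"
  using assms dom_faces_subset doubleton_in_dom_edges_iff[OF assms]
  unfolding dom_faces_def by blast

lemma dom_edges_hedge: "e \<in> dom_edges S \<Longrightarrow> is_hedge e"
  unfolding dom_edges_def is_hedge_def by blast

lemma inner_boundary_subset: "inner_boundary S \<subseteq> dom_faces S"
  unfolding inner_boundary_def by blast

lemma mem_inner_boundaryI:
  assumes "adj u v" "u \<in> dom_faces S" "v \<notin> S"
  shows "u \<in> inner_boundary S"
  using assms dom_faces_subset unfolding inner_boundary_def boundary_edges_def by blast

lemma omega_subset_dom_edges: "omega S \<sigma> \<subseteq> dom_edges S"
  unfolding omega_def by blast

lemma doubleton_in_omega_iff: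
  assumes "adj u v"
  shows "{u, v} \<in> omega S \<sigma> \<longleftrightarrow> u \<in> S \<and> v \<in> S \<and> \<sigma> u \<noteq> \<sigma> v"
proof -
  have "(\<exists>a b. {u, v} = {a, b} \<and> \<sigma> a \<noteq> \<sigma> b) \<longleftrightarrow> \<sigma> u \<noteq> \<sigma> v"
    by (metis doubleton_eq_iff)
  then show ?thesis
    unfolding omega_def using doubleton_in_dom_edges_iff[OF assms] by blast
qed

lemma omega_eqI:
  assumes "A \<subseteq> dom_edges S"
    and "\<And>u v. adj u v \<Longrightarrow> u \<in> S \<Longrightarrow> v \<in> S \<Longrightarrow> {u, v} \<in> A \<longleftrightarrow> \<sigma> u \<noteq> \<sigma> v"
  shows "omega S \<sigma> = A"
proof (rule set_eqI)
  fix e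
  show "e \<in> omega S \<sigma> \<longleftrightarrow> e \<in> A"
  proof (cases "e \<in> dom_edges S")
    case True
    then obtain u v where "e = {u, v}" "adj u v" "u \<in> S" "v \<in> S"
      unfolding dom_edges_def by blast
    then show ?thesis
      using assms(2)[of u v] doubleton_in_omega_iff[of u v S \<sigma>] by simp
  next
    case False
    then show ?thesis
      using assms(1) omega_subset_dom_edges by blast
  qed
qed

lemma coherent_iff:
  "coherent S \<sigma>\<^sub>r \<sigma>\<^sub>b \<longleftrightarrow>
    (\<forall>u v. adj u v \<longrightarrow> u \<in> S \<longrightarrow> v \<in> S \<longrightarrow> \<sigma>\<^sub>r u = \<sigma>\<^sub>r v \<or> \<sigma>\<^sub>b u = \<sigma>\<^sub>b v)"
  unfolding coherent_def using adj_in_dom_faces_iff by blast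

lemma coherent_iff_disjoint_omega:
  "coherent S \<sigma>\<^sub>r \<sigma>\<^sub>b \<longleftrightarrow> omega S \<sigma>\<^sub>r \<inter> omega S \<sigma>\<^sub>b = {}"
proof -
  have "omega S \<sigma>\<^sub>r \<inter> omega S \<sigma>\<^sub>b = {} \<longleftrightarrow>
      (\<forall>e\<in>dom_edges S. \<not> (e \<in> omega S \<sigma>\<^sub>r \<and> e \<in> omega S \<sigma>\<^sub>b))"
    using omega_subset_dom_edges by blast
  also have "\<dots> \<longleftrightarrow> coherent S \<sigma>\<^sub>r \<sigma>\<^sub>b"
    unfolding ball_dom_edges_iff coherent_iff by (simp add: doubleton_in_omega_iff)
  finally show ?thesis ..
qed

lemma loop_config_empty: "loop_config S {}"
  unfolding loop_config_def by simp

lemma finite_loop_config: "finite S \<Longrightarrow> loop_config S \<omega> \<Longrightarrow> finite \<omega>"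
  unfolding loop_config_def using finite_dom_edges finite_subset by blast

lemma card_loop_config_edge: "loop_config S \<omega> \<Longrightarrow> e \<in> \<omega> \<Longrightarrow> card e = 2"
  unfolding loop_config_def using dom_edges_hedge card_hedge by blast

lemma loop_config_omega:
  assumes "\<forall>w\<in>inner_boundary S. \<forall>w'\<in>inner_boundary S. \<sigma> w = \<sigma> w'"
  shows "loop_config S (omega S \<sigma>)"
  unfolding loop_config_def
proof (intro conjI allI impI omega_subset_dom_edges)
  fix t
  assume "is_hvertex t"
  then obtain p q r where t: "t = {p, q, r}" and pqr: "adj p q" "adj p r" "adj q r"
    by (rule is_hvertexE)
  have boundary: "\<sigma> x = \<sigma> y" if "adj x y" "adj x z" "adj y z" "x \<in> S" "y \<in> S" "z \<notin> S" for x y z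
  proof -
    have "x \<in> dom_faces S" "y \<in> dom_faces S"
      using adj_in_dom_faces_iff[OF \<open>adj x y\<close>] that by blast+
    then have "x \<in> inner_boundary S" "y \<in> inner_boundary S"
      using that by (blast intro: mem_inner_boundaryI)+
    then show ?thesis
      using assms by blast
  qed
  have "{p, q} \<in> omega S \<sigma> \<longleftrightarrow> ({p, r} \<in> omega S \<sigma>) \<noteq> ({q, r} \<in> omega S \<sigma>)"
    unfolding doubleton_in_omega_iff[OF pqr(1)] doubleton_in_omega_iff[OF pqr(2)]
      doubleton_in_omega_iff[OF pqr(3)]
    using boundary[OF pqr] boundary[OF pqr(2) pqr(1) adj_sym[OF pqr(3)]]
      boundary[OF pqr(3) adj_sym[OF pqr(1)] adj_sym[OF pqr(2)]]
    by (cases "p \<in> S"; cases "q \<in> S"; cases "r \<in> S") auto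
  moreover have "\<forall>e\<in>omega S \<sigma>. card e = 2"
    using omega_subset_dom_edges dom_edges_hedge card_hedge by blast
  ultimately show "even (card {e \<in> omega S \<sigma>. e \<subseteq> t})"
    unfolding t using even_card_edges_in_triangle_iff[of p q r] adj_imp_neq pqr by blast
qed

lemma constant_on_inner_boundary:
  assumes "is_domain S"
    and boundary: "\<And>e x y. e \<in> boundary_edges S \<Longrightarrow> x \<in> e \<Longrightarrow> y \<in> e \<Longrightarrow> \<tau> x = \<tau> y"
    and "w \<in> inner_boundary S" "w' \<in> inner_boundary S"
  shows "\<tau> w = \<tau> w'"
proof -
  obtain ps where polygon: "self_avoiding_polygon ps" and edges: "boundary_edges S = polygon_edges ps"
    using assms(1) unfolding is_domain_def by blast
  define n where "n = length ps"
  define E where "E i = ps ! i \<inter> ps ! ((i + 1) mod n)" for i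
  have "n \<ge> 3" and vertex: "\<And>i. i < n \<Longrightarrow> is_hvertex (ps ! i)"
    and hedge: "\<And>i. i < n \<Longrightarrow> is_hedge (E i)"
    using polygon unfolding self_avoiding_polygon_def E_def n_def by blast+
  have boundary_E: "boundary_edges S = E ` {..<n}"
    unfolding edges polygon_edges_def E_def n_def by auto
  have consecutive: "E i \<inter> E (Suc i) \<noteq> {}" if "Suc i < n" for i
  proof (rule Int_nonempty_if_card_gt)
    show "E i \<subseteq> ps ! Suc i" "E (Suc i) \<subseteq> ps ! Suc i"
      unfolding E_def using that by auto
    have "card (ps ! Suc i) = 3"
      using vertex[OF that] unfolding is_hvertex_def by blast
    then show "finite (ps ! Suc i)" "card (ps ! Suc i) < card (E i) + card (E (Suc i))"
      using card_hedge[OF hedge[of i]] card_hedge[OF hedge[OF that]] that by (auto intro: card_ge_0_finite)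
  qed
  have along: "\<tau> x = \<tau> y" if "i < n" "x \<in> E i" "y \<in> E 0" for i x y
    using that
  proof (induction i arbitrary: x)
    case 0
    then show ?case
      using boundary[of "E 0" x y] boundary_E by blast
  next
    case (Suc i)
    then obtain z where "z \<in> E i" "z \<in> E (Suc i)"
      using consecutive by blast
    have "\<tau> x = \<tau> z"
      using boundary[of "E (Suc i)" x z] boundary_E Suc.prems \<open>z \<in> E (Suc i)\<close> by blast
    also have "\<tau> z = \<tau> y"
      using Suc.IH[of z] Suc.prems \<open>z \<in> E i\<close> by simp
    finally show ?case .
  qed
  have "E 0 \<noteq> {}"
    using card_hedge[OF hedge[of 0]] \<open>n \<ge> 3\<close> by auto
  then obtain y where "y \<in> E 0"
    by blast
  obtain i j where "i < n" "w \<in> E i" "j < n" "w' \<in> E j"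
    using assms(3,4) unfolding inner_boundary_def boundary_E by blast
  then show ?thesis
    using along[of i w y] along[of j w' y] \<open>y \<in> E 0\<close> by simp
qed

lemma even_subgraph_if_loop_config:
  assumes "finite S" "loop_config S \<omega>"
  shows "even_subgraph \<omega>"
proof -
  have walls: "\<omega> \<subseteq> dom_edges S"
    using assms(2) unfolding loop_config_def by blast
  then have "finite \<omega>"
    using finite_dom_edges[OF assms(1)] by (rule finite_subset)
  then show ?thesis
    using walls assms(2) dom_edges_hedge unfolding loop_config_def even_subgraph_def by blast
qed

lemma loop_config_imp_omega:
  assumes "is_domain S" "loop_config S \<omega>"
  obtains \<sigma> where "\<sigma> \<in> spins S" "omega S \<sigma> = \<omega>" "\<forall>w\<in>inner_boundary S. \<sigma> w"
proof -
  have even: "even_subgraph \<omega>"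
    using assms even_subgraph_if_loop_config unfolding is_domain_def by blast
  have walls: "\<omega> \<subseteq> dom_edges S"
    using assms(2) unfolding loop_config_def by blast
  define w\<^sub>0 where "w\<^sub>0 = (SOME w. w \<in> inner_boundary S)"
  define \<sigma> where "\<sigma> = restrict (\<lambda>f. ray_parity \<omega> f = ray_parity \<omega> w\<^sub>0) (dom_faces S)"
  have "\<sigma> \<in> spins S"
    unfolding \<sigma>_def spins_def by simp
  moreover have "omega S \<sigma> = \<omega>"
  proof (rule omega_eqI[OF walls])
    fix u v
    assume "adj u v" "u \<in> S" "v \<in> S"
    then have "u \<in> dom_faces S" "v \<in> dom_faces S"
      using adj_in_dom_faces_iff by blast+
    then show "{u, v} \<in> \<omega> \<longleftrightarrow> \<sigma> u \<noteq> \<sigma> v"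
      using ray_parity_adj[OF even \<open>adj u v\<close>] unfolding \<sigma>_def by auto
  qed
  moreover have "\<sigma> w" if "w \<in> inner_boundary S" for w
  proof -
    have "ray_parity \<omega> x = ray_parity \<omega> y" if "e \<in> boundary_edges S" "x \<in> e" "y \<in> e" for e x y
    proof -
      obtain u v where "e = {u, v}" "adj u v" "u \<in> S" "v \<notin> S"
        using \<open>e \<in> boundary_edges S\<close> unfolding boundary_edges_def by blast
      moreover from this have "{u, v} \<notin> \<omega>"
        using walls doubleton_in_dom_edges_iff by blast
      ultimately show ?thesis
        using ray_parity_adj[OF even \<open>adj u v\<close>] that(2,3) by auto
    qed
    moreover have "w\<^sub>0 \<in> inner_boundary S"
      using that unfolding w\<^sub>0_def by (rule someI)
    ultimately have "ray_parity \<omega> w = ray_parity \<omega> w\<^sub>0"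
      using constant_on_inner_boundary[OF assms(1)] that by blast
    then show ?thesis
      unfolding \<sigma>_def using that inner_boundary_subset by auto
  qed
  ultimately show thesis
    using that by blast
qed

section \<open>Uniformity of the pair of domain walls\<close>

lemma finite_plus_const_configs:
  assumes "finite S"
  shows "finite (plus_const_configs S)"
proof -
  have "finite (spins S)"
    unfolding spins_def using finite_subset[OF dom_faces_subset assms] by (simp add: finite_PiE)
  moreover have "plus_const_configs S \<subseteq> spins S \<times> spins S"
    unfolding plus_const_configs_def by auto
  ultimately show ?thesis
    by (meson finite_SigmaI finite_subset)
qed

text \<open>With \<open>+\<close> encoded as \<open>True\<close>, the product of two spins is equality of booleans.\<close>

definition spin_mult :: "face set \<Rightarrow> (face \<Rightarrow> bool) \<Rightarrow> (face \<Rightarrow> bool) \<Rightarrow> face \<Rightarrow> bool" where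
  "spin_mult S a \<sigma> = restrict (\<lambda>f. \<sigma> f = a f) (dom_faces S)"

lemma spin_mult_in_spins: "spin_mult S a \<sigma> \<in> spins S"
  unfolding spin_mult_def spins_def by simp

lemma spin_mult_spin_mult:
  assumes "\<sigma> \<in> spins S"
  shows "spin_mult S a (spin_mult S a \<sigma>) = \<sigma>"
proof
  fix f
  show "spin_mult S a (spin_mult S a \<sigma>) f = \<sigma> f"
  proof (cases "f \<in> dom_faces S")
    case False
    then have "\<sigma> f = undefined"
      using PiE_arb[OF assms[unfolded spins_def]] by blast
    with False show ?thesis
      by (simp add: spin_mult_def)
  qed (cases "\<sigma> f"; cases "a f"; simp add: spin_mult_def)
qed

lemma spin_mult_on_inner_boundary:
  assumes "\<forall>w\<in>inner_boundary S. a w" "w \<in> inner_boundary S"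
  shows "spin_mult S a \<sigma> w = \<sigma> w"
  using assms inner_boundary_subset unfolding spin_mult_def by auto

lemma omega_spin_mult: "omega S (spin_mult S a \<sigma>) = sym_diff (omega S \<sigma>) (omega S a)"
proof (rule omega_eqI)
  show "sym_diff (omega S \<sigma>) (omega S a) \<subseteq> dom_edges S"
    using omega_subset_dom_edges by blast
  fix u v
  assume "adj u v" "u \<in> S" "v \<in> S"
  then have "u \<in> dom_faces S" "v \<in> dom_faces S"
    using adj_in_dom_faces_iff by blast+
  with \<open>adj u v\<close> \<open>u \<in> S\<close> \<open>v \<in> S\<close> show "{u, v} \<in> sym_diff (omega S \<sigma>) (omega S a) \<longleftrightarrow>
      spin_mult S a \<sigma> u \<noteq> spin_mult S a \<sigma> v"
    unfolding spin_mult_def by (auto simp: doubleton_in_omega_iff)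
qed

definition omega_pair :: "face set \<Rightarrow> (face \<Rightarrow> bool) \<times> (face \<Rightarrow> bool) \<Rightarrow> hedge set \<times> hedge set" where
  "omega_pair S = (\<lambda>(\<sigma>\<^sub>r, \<sigma>\<^sub>b). (omega S \<sigma>\<^sub>r, omega S \<sigma>\<^sub>b))"

definition omega_fibre :: "face set \<Rightarrow> hedge set \<times> hedge set \<Rightarrow> ((face \<Rightarrow> bool) \<times> (face \<Rightarrow> bool)) set" where
  "omega_fibre S w = {p \<in> plus_const_configs S. omega_pair S p = w}"

lemma mem_omega_fibre_iff:
  "(\<sigma>\<^sub>r, \<sigma>\<^sub>b) \<in> omega_fibre S (\<omega>\<^sub>r, \<omega>\<^sub>b) \<longleftrightarrow>
    \<sigma>\<^sub>r \<in> spins S \<and> \<sigma>\<^sub>b \<in> spins S \<and> (\<forall>w\<in>inner_boundary S. \<sigma>\<^sub>r w) \<and>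
    (\<forall>w\<in>inner_boundary S. \<forall>w'\<in>inner_boundary S. \<sigma>\<^sub>b w = \<sigma>\<^sub>b w') \<and>
    omega S \<sigma>\<^sub>r = \<omega>\<^sub>r \<and> omega S \<sigma>\<^sub>b = \<omega>\<^sub>b \<and> \<omega>\<^sub>r \<inter> \<omega>\<^sub>b = {}"
  unfolding omega_fibre_def plus_const_configs_def omega_pair_def coherent_iff_disjoint_omega
  by auto

lemma omega_fibre_subset: "omega_fibre S w \<subseteq> spins S \<times> spins S"
  unfolding omega_fibre_def plus_const_configs_def by blast

lemma spin_mult_mem_omega_fibre:
  assumes a: "\<forall>w\<in>inner_boundary S. a w" and b: "\<forall>w\<in>inner_boundary S. b w"
    and "p \<in> omega_fibre S (\<omega>\<^sub>r, \<omega>\<^sub>b)"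
    and "sym_diff \<omega>\<^sub>r (omega S a) \<inter> sym_diff \<omega>\<^sub>b (omega S b) = {}"
  shows "map_prod (spin_mult S a) (spin_mult S b) p \<in>
    omega_fibre S (sym_diff \<omega>\<^sub>r (omega S a), sym_diff \<omega>\<^sub>b (omega S b))"
proof -
  obtain \<sigma>\<^sub>r \<sigma>\<^sub>b where p: "p = (\<sigma>\<^sub>r, \<sigma>\<^sub>b)"
    by fastforce
  have \<sigma>: "\<forall>w\<in>inner_boundary S. \<sigma>\<^sub>r w" "\<forall>w\<in>inner_boundary S. \<forall>w'\<in>inner_boundary S. \<sigma>\<^sub>b w = \<sigma>\<^sub>b w'"
    "omega S \<sigma>\<^sub>r = \<omega>\<^sub>r" "omega S \<sigma>\<^sub>b = \<omega>\<^sub>b"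
    using assms(3) unfolding p mem_omega_fibre_iff by blast+
  have "\<forall>w\<in>inner_boundary S. spin_mult S a \<sigma>\<^sub>r w"
    using \<sigma>(1) spin_mult_on_inner_boundary[OF a] by simp
  moreover have "\<forall>w\<in>inner_boundary S. \<forall>w'\<in>inner_boundary S. spin_mult S b \<sigma>\<^sub>b w = spin_mult S b \<sigma>\<^sub>b w'"
    using \<sigma>(2) spin_mult_on_inner_boundary[OF b] by metis
  ultimately show ?thesis
    using assms(4) spin_mult_in_spins unfolding p map_prod_simp mem_omega_fibre_iff omega_spin_mult \<sigma>(3,4)
    by blast
qed

lemma card_omega_fibre:
  assumes "is_domain S" "(\<omega>\<^sub>r, \<omega>\<^sub>b) \<in> disjoint_loop_pairs S"
  shows "card (omega_fibre S (\<omega>\<^sub>r, \<omega>\<^sub>b)) = card (omega_fibre S ({}, {}))"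
proof -
  have loops: "loop_config S \<omega>\<^sub>r" "loop_config S \<omega>\<^sub>b" and disjoint: "\<omega>\<^sub>r \<inter> \<omega>\<^sub>b = {}"
    using assms(2) unfolding disjoint_loop_pairs_def by simp_all
  obtain a where a: "omega S a = \<omega>\<^sub>r" "\<forall>w\<in>inner_boundary S. a w"
    using loop_config_imp_omega[OF assms(1) loops(1)] by blast
  obtain b where b: "omega S b = \<omega>\<^sub>b" "\<forall>w\<in>inner_boundary S. b w"
    using loop_config_imp_omega[OF assms(1) loops(2)] by blast
  let ?g = "map_prod (spin_mult S a) (spin_mult S b)"
  have involution: "\<forall>p\<in>omega_fibre S w. ?g (?g p) = p" for w
    using omega_fibre_subset[of S w] by (auto simp: spin_mult_spin_mult)
  have "bij_betw ?g (omega_fibre S ({}, {})) (omega_fibre S (\<omega>\<^sub>r, \<omega>\<^sub>b))"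
  proof (rule bij_betw_byWitness[where f' = ?g, OF involution involution])
    show "?g ` omega_fibre S ({}, {}) \<subseteq> omega_fibre S (\<omega>\<^sub>r, \<omega>\<^sub>b)"
      using spin_mult_mem_omega_fibre[OF a(2) b(2), of _ "{}" "{}"] disjoint by (auto simp: a(1) b(1))
    show "?g ` omega_fibre S (\<omega>\<^sub>r, \<omega>\<^sub>b) \<subseteq> omega_fibre S ({}, {})"
      using spin_mult_mem_omega_fibre[OF a(2) b(2), of _ \<omega>\<^sub>r \<omega>\<^sub>b] by (auto simp: a(1) b(1))
  qed
  then show ?thesis
    by (simp add: bij_betw_same_card)
qed

lemma map_pmf_omega_pair_mu_plus_const:
  assumes "is_domain S"
  shows "map_pmf (omega_pair S) (mu_plus_const S) = pmf_of_set (disjoint_loop_pairs S)"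
  unfolding mu_plus_const_def
proof (rule map_pmf_of_set_equal_fibres)
  show "finite (plus_const_configs S)"
    using assms finite_plus_const_configs unfolding is_domain_def by blast
  show image: "omega_pair S ` plus_const_configs S = disjoint_loop_pairs S"
  proof (intro equalityI subsetI)
    fix w
    assume "w \<in> omega_pair S ` plus_const_configs S"
    then obtain \<sigma>\<^sub>r \<sigma>\<^sub>b where "w = (omega S \<sigma>\<^sub>r, omega S \<sigma>\<^sub>b)" "(\<sigma>\<^sub>r, \<sigma>\<^sub>b) \<in> plus_const_configs S"
      unfolding omega_pair_def by auto
    then show "w \<in> disjoint_loop_pairs S"
      unfolding plus_const_configs_def disjoint_loop_pairs_def coherent_iff_disjoint_omega
      by (auto intro: loop_config_omega)
  next
    fix w
    assume "w \<in> disjoint_loop_pairs S"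
    then obtain \<omega>\<^sub>r \<omega>\<^sub>b where w: "w = (\<omega>\<^sub>r, \<omega>\<^sub>b)" "loop_config S \<omega>\<^sub>r" "loop_config S \<omega>\<^sub>b" "\<omega>\<^sub>r \<inter> \<omega>\<^sub>b = {}"
      unfolding disjoint_loop_pairs_def by auto
    obtain \<sigma>\<^sub>r where "\<sigma>\<^sub>r \<in> spins S" "omega S \<sigma>\<^sub>r = \<omega>\<^sub>r" "\<forall>w\<in>inner_boundary S. \<sigma>\<^sub>r w"
      using loop_config_imp_omega[OF assms w(2)] by blast
    moreover obtain \<sigma>\<^sub>b where "\<sigma>\<^sub>b \<in> spins S" "omega S \<sigma>\<^sub>b = \<omega>\<^sub>b" "\<forall>w\<in>inner_boundary S. \<sigma>\<^sub>b w"
      using loop_config_imp_omega[OF assms w(3)] by blast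
    ultimately have "(\<sigma>\<^sub>r, \<sigma>\<^sub>b) \<in> omega_fibre S w"
      using w(1,4) by (simp add: mem_omega_fibre_iff)
    then show "w \<in> omega_pair S ` plus_const_configs S"
      unfolding omega_fibre_def by force
  qed
  have "({}, {}) \<in> disjoint_loop_pairs S"
    using loop_config_empty unfolding disjoint_loop_pairs_def by simp
  with image show "plus_const_configs S \<noteq> {}"
    by auto
  show "card {p \<in> plus_const_configs S. omega_pair S p = w} = card (omega_fibre S ({}, {}))"
    if "w \<in> disjoint_loop_pairs S" for w
    using card_omega_fibre[OF assms] that unfolding omega_fibre_def by (cases w) simp
qed

section \<open>Splitting a loop configuration\<close>

definition touching :: "hedge set \<Rightarrow> hedge rel" where
  "touching \<omega> = {(e, e'). e \<in> \<omega> \<and> e' \<in> \<omega> \<and> (\<exists>t. is_hvertex t \<and> e \<subseteq> t \<and> e' \<subseteq> t)}"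

lemma n_loops_eq: "n_loops \<omega> = card (\<omega> // (touching \<omega>)\<^sup>*)"
  unfolding n_loops_def touching_def ..

lemma loop_config_Un:
  assumes "finite S" "loop_config S a" "loop_config S b" "a \<inter> b = {}"
  shows "loop_config S (a \<union> b)"
  unfolding loop_config_def
proof (intro conjI allI impI)
  show "a \<union> b \<subseteq> dom_edges S"
    using assms(2,3) unfolding loop_config_def by blast
  fix t
  assume "is_hvertex t"
  have "{e\<in>a \<union> b. e \<subseteq> t} = {e\<in>a. e \<subseteq> t} \<union> {e\<in>b. e \<subseteq> t}"
    by blast
  moreover have "card ({e\<in>a. e \<subseteq> t} \<union> {e\<in>b. e \<subseteq> t}) = card {e\<in>a. e \<subseteq> t} + card {e\<in>b. e \<subseteq> t}"
    using finite_loop_config[OF assms(1)] assms(2-4) by (intro card_Un_disjoint) auto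
  ultimately show "even (card {e\<in>a \<union> b. e \<subseteq> t})"
    using assms(2,3) \<open>is_hvertex t\<close> unfolding loop_config_def by simp
qed

lemma loop_config_Diff:
  assumes "finite S" "loop_config S \<omega>" "loop_config S a" "a \<subseteq> \<omega>"
  shows "loop_config S (\<omega> - a)"
  unfolding loop_config_def
proof (intro conjI allI impI)
  show "\<omega> - a \<subseteq> dom_edges S"
    using assms(2) unfolding loop_config_def by blast
  fix t
  assume "is_hvertex t"
  have "{e\<in>\<omega> - a. e \<subseteq> t} = {e\<in>\<omega>. e \<subseteq> t} - {e\<in>a. e \<subseteq> t}"
    by blast
  moreover have "card ({e\<in>\<omega>. e \<subseteq> t} - {e\<in>a. e \<subseteq> t}) = card {e\<in>\<omega>. e \<subseteq> t} - card {e\<in>a. e \<subseteq> t}"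
    using finite_loop_config[OF assms(1,3)] assms(4) by (intro card_Diff_subset) auto
  moreover have "card {e\<in>a. e \<subseteq> t} \<le> card {e\<in>\<omega>. e \<subseteq> t}"
    using finite_loop_config[OF assms(1,2)] assms(4) by (intro card_mono) auto
  ultimately show "even (card {e\<in>\<omega> - a. e \<subseteq> t})"
    using assms(2,3) \<open>is_hvertex t\<close> unfolding loop_config_def by auto
qed

text \<open>Every vertex has degree 0 or 2 in a loop configuration, so a loop configuration contained
  in \<open>\<omega>\<close> contains, with any edge, the other edge of \<open>\<omega>\<close> at each of its endpoints.\<close>

lemma touching_Image_subset:
  assumes "finite S" "loop_config S \<omega>" "loop_config S a" "a \<subseteq> \<omega>"
  shows "touching \<omega> `` a \<subseteq> a"
proof
  fix y
  assume "y \<in> touching \<omega> `` a"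
  then obtain x t where "x \<in> a" "y \<in> \<omega>" "is_hvertex t" "x \<subseteq> t" "y \<subseteq> t"
    unfolding touching_def by blast
  show "y \<in> a"
  proof (rule ccontr)
    assume "y \<notin> a"
    let ?D = "{e\<in>\<omega>. e \<subseteq> t}"
    have "finite ?D"
      using finite_loop_config[OF assms(1,2)] by simp
    have "{x, y} \<subseteq> ?D"
      using \<open>x \<in> a\<close> \<open>y \<in> \<omega>\<close> \<open>x \<subseteq> t\<close> \<open>y \<subseteq> t\<close> assms(4) by blast
    have "x \<noteq> y"
      using \<open>x \<in> a\<close> \<open>y \<notin> a\<close> by blast
    then have "card {x, y} = 2"
      by simp
    then have "card ?D \<ge> 2"
      using card_mono[OF \<open>finite ?D\<close> \<open>{x, y} \<subseteq> ?D\<close>] by simp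
    moreover have "card ?D \<le> 3"
    proof -
      have "card t = 3"
        using \<open>is_hvertex t\<close> unfolding is_hvertex_def by blast
      then have "finite t"
        by (intro card_ge_0_finite) simp
      then have "card ?D \<le> card t choose 2"
        using card_edges_in_subset_le card_loop_config_edge[OF assms(2)] by blast
      then show ?thesis
        using \<open>card t = 3\<close> by (simp add: choose_two)
    qed
    moreover have "even (card ?D)"
      using assms(2) \<open>is_hvertex t\<close> unfolding loop_config_def by blast
    ultimately have "card ?D = card {x, y}"
      using \<open>card {x, y} = 2\<close> by (cases "card ?D = 3") auto
    then have "?D = {x, y}"
      using card_subset_eq[OF \<open>finite ?D\<close> \<open>{x, y} \<subseteq> ?D\<close>] by simp
    then have "{e\<in>a. e \<subseteq> t} = {x}"
      using \<open>x \<in> a\<close> \<open>y \<notin> a\<close> \<open>x \<subseteq> t\<close> assms(4) by blast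
    moreover have "even (card {e\<in>a. e \<subseteq> t})"
      using assms(3) \<open>is_hvertex t\<close> unfolding loop_config_def by blast
    ultimately show False
      by simp
  qed
qed

lemma loop_config_if_touching_closed:
  assumes "loop_config S \<omega>" "a \<subseteq> \<omega>" "touching \<omega> `` a \<subseteq> a"
  shows "loop_config S a"
  unfolding loop_config_def
proof (intro conjI allI impI)
  show "a \<subseteq> dom_edges S"
    using assms(1,2) unfolding loop_config_def by blast
  fix t
  assume "is_hvertex t"
  show "even (card {e\<in>a. e \<subseteq> t})"
  proof (cases "\<exists>x\<in>a. x \<subseteq> t")
    case True
    then have "{e\<in>a. e \<subseteq> t} = {e\<in>\<omega>. e \<subseteq> t}"
      using assms(2,3) \<open>is_hvertex t\<close> unfolding touching_def by blast
    then show ?thesis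
      using assms(1) \<open>is_hvertex t\<close> unfolding loop_config_def by simp
  next
    case False
    then have "{e\<in>a. e \<subseteq> t} = {}"
      by blast
    then show ?thesis
      by (simp only: card.empty even_zero)
  qed
qed

lemma card_loop_subconfigs:
  assumes "finite S" "loop_config S \<omega>"
  shows "card {a. a \<subseteq> \<omega> \<and> loop_config S a} = 2 ^ n_loops \<omega>"
proof -
  have "{a. a \<subseteq> \<omega> \<and> loop_config S a} = {a. a \<subseteq> \<omega> \<and> touching \<omega> `` a \<subseteq> a}"
    using touching_Image_subset[OF assms] loop_config_if_touching_closed[OF assms(2)] by blast
  moreover have "touching \<omega> \<subseteq> \<omega> \<times> \<omega>" "sym (touching \<omega>)"
    unfolding touching_def sym_def by blast+
  ultimately show ?thesis
    using card_closed_subsets_rtrancl[OF finite_loop_config[OF assms]] n_loops_eq by simp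
qed

lemma card_union_fibre:
  assumes "finite S"
  shows "card {p \<in> disjoint_loop_pairs S. (\<lambda>(a, b). a \<union> b) p = \<omega>} =
    (if loop_config S \<omega> then 2 ^ n_loops \<omega> else 0)"
proof (cases "loop_config S \<omega>")
  case True
  have "{p \<in> disjoint_loop_pairs S. (\<lambda>(a, b). a \<union> b) p = \<omega>} =
      (\<lambda>a. (a, \<omega> - a)) ` {a. a \<subseteq> \<omega> \<and> loop_config S a}"
    using loop_config_Diff[OF assms True] unfolding disjoint_loop_pairs_def by auto
  moreover have "inj_on (\<lambda>a. (a, \<omega> - a)) {a. a \<subseteq> \<omega> \<and> loop_config S a}"
    by (rule inj_onI) simp
  ultimately show ?thesis
    using True card_loop_subconfigs[OF assms True] by (simp add: card_image)
next
  case False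
  then have "{p \<in> disjoint_loop_pairs S. (\<lambda>(a, b). a \<union> b) p = \<omega>} = {}"
    using loop_config_Un[OF assms] unfolding disjoint_loop_pairs_def by auto
  then show ?thesis
    using False by (simp only: card.empty if_False)
qed

lemma pmf_union_disjoint_loop_pairs:
  assumes "finite S"
  shows "pmf (map_pmf (\<lambda>(a, b). a \<union> b) (pmf_of_set (disjoint_loop_pairs S))) \<omega> = loop_O2 S \<omega>"
proof -
  let ?A = "disjoint_loop_pairs S" and ?L = "{\<omega>. loop_config S \<omega>}"
  have "?L \<subseteq> Pow (dom_edges S)"
    unfolding loop_config_def by blast
  then have "finite ?L"
    using finite_dom_edges[OF assms] finite_subset by blast
  moreover have "?A \<subseteq> ?L \<times> ?L"
    unfolding disjoint_loop_pairs_def by blast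
  ultimately have "finite ?A"
    using finite_subset by blast
  have "?A \<noteq> {}"
    using loop_config_empty unfolding disjoint_loop_pairs_def by blast
  have "(\<lambda>(a, b). a \<union> b) ` ?A \<subseteq> ?L"
    using loop_config_Un[OF assms] unfolding disjoint_loop_pairs_def by auto
  then have "card ?A = (\<Sum>\<omega>'\<in>?L. 2 ^ n_loops \<omega>')"
    using card_eq_sum_card_fibres[OF \<open>finite ?A\<close> \<open>finite ?L\<close>] card_union_fibre[OF assms] by simp
  then show ?thesis
    unfolding pmf_map_pmf_of_set[OF \<open>finite ?A\<close> \<open>?A \<noteq> {}\<close>] card_union_fibre[OF assms] loop_O2_def
    by simp
qed

theorem proposition2p1:
  assumes "is_domain S"
  shows "map_pmf (\<lambda>(sr, sb). (omega S sr, omega S sb)) (mu_plus_const S)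
           = pmf_of_set (disjoint_loop_pairs S) \<and>
         (\<forall>\<omega>. pmf (map_pmf (\<lambda>(sr, sb). omega S sr \<union> omega S sb) (mu_plus_const S)) \<omega>
           = loop_O2 S \<omega>)"
proof -
  have pairs: "map_pmf (\<lambda>(sr, sb). (omega S sr, omega S sb)) (mu_plus_const S) =
      pmf_of_set (disjoint_loop_pairs S)"
    using map_pmf_omega_pair_mu_plus_const[OF assms] unfolding omega_pair_def .
  have "map_pmf (\<lambda>(sr, sb). omega S sr \<union> omega S sb) (mu_plus_const S) =
      map_pmf (\<lambda>(a, b). a \<union> b) (map_pmf (\<lambda>(sr, sb). (omega S sr, omega S sb)) (mu_plus_const S))"
    by (simp add: map_pmf_comp split_def)
  moreover have "finite S"
    using assms unfolding is_domain_def by blast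
  ultimately show ?thesis
    using pairs pmf_union_disjoint_loop_pairs by simp
qed

end
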